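(* Let $Q$ be a quadrilateral in $K^2$ in standard form with centroid $(h,k)$ and coefficient $\mu$. (1) A line $\ell$ is a bisector of $Q$ with midpoint $(p,q)\neq(0,0)$ if and only if $q(q-2k)-\mu p(p-2h)=0$ and $\ell$ has equation $qX+pY-2pq=0$. (2) If $(h,k)=(0,0)$, every line through $(0,0)$ is a bisector of $Q$ with midpoint $(0,0)$. (3) If $(h,k)\neq(0,0)$, then the unique bisector of $Q$ whose midpoint is $(0,0)$ is the line $kY+\mu hX=0$.
   Context: $K$ is a field of characteristic $\neq 2$; we work in $K^2$ inside the projective plane. A quadrilateral $Q=ABA'B'$ consists of four distinct lines $A,B,A',B'$ (sides), not all through one point, with adjacent sides ($A,B$; $B,A'$; $A',B'$; $B',A$) not parallel; opposite sides may be parallel. Vertices: $A\cap B$, $B\cap A'$, $A'\cap B'$, $B'\cap A$ (two may coincide if three sides are concurrent). The centroid is the average of the four vertices (equivalently the midpoint of the midpoints of the diagonals). $Q$ is in standard form if $A$ is the line $Y=0$ and $A'$ is the line $X=0$; then $B$ and $B'$ are neither horizontal nor vertical, and the coefficient of $Q$ is $\mu=t_Bt_{B'}$, the product of the slopes of $B$ and $B'$. A line $\ell$ crosses a pair $\{\ell_1,\ell_2\}$ if it is distinct from both and not parallel to both; $\mathrm{mid}_{\{\ell_1,\ell_2\}}(\ell)$ is the midpoint of the points where $\ell$ meets $\ell_1,\ell_2$ (the point at infinity of $\ell$ if one of them is at infinity). $\ell$ bisects $Q$ (is a bisector) if $\mathrm{mid}_{\mathsf P}(\ell)$ is the same for all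 pairs $\mathsf P$ among $\{A,A'\},\{B,B'\}$ that $\ell$ crosses; this common point is the midpoint of the bisector. *)

theory Defs
  imports Main
begin

definition is_line :: "('a::field \<times> 'a) set \<Rightarrow> bool" where
  "is_line L \<longleftrightarrow> (\<exists>a b c. (a, b) \<noteq> (0, 0) \<and> L = {(x, y). a * x + b * y + c = 0})"

text \<open>Direction (1-dimensional subspace) of a line; it represents the point at infinity.\<close>
definition line_dir :: "('a::field \<times> 'a) set \<Rightarrow> ('a \<times> 'a) set" where
  "line_dir L = {(fst P - fst R, snd P - snd R) | P R. P \<in> L \<and> R \<in> L}"

definition parallel :: "('a::field \<times> 'a) set \<Rightarrow> ('a \<times> 'a) set \<Rightarrow> bool" where
  "parallel L M \<longleftrightarrow> line_dir L = line_dir M"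

definition meet :: "('a::field \<times> 'a) set \<Rightarrow> ('a \<times> 'a) set \<Rightarrow> 'a \<times> 'a" where
  "meet L M = (THE P. P \<in> L \<and> P \<in> M)"

text \<open>Points of the projective plane: affine points, or points at infinity
  (represented by a direction).\<close>
datatype 'a ppoint = Fin "'a \<times> 'a" | Inf "('a \<times> 'a) set"

definition midp :: "('a::field \<times> 'a) \<Rightarrow> 'a \<times> 'a \<Rightarrow> 'a \<times> 'a" where
  "midp P R = ((fst P + fst R) / 2, (snd P + snd R) / 2)"

definition quadrilateral ::
  "('a::field \<times> 'a) set \<Rightarrow> ('a \<times> 'a) set \<Rightarrow> ('a \<times> 'a) set \<Rightarrow> ('a \<times> 'a) set \<Rightarrow> bool" where
  "quadrilateral A B A' B' \<longleftrightarrow>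
     is_line A \<and> is_line B \<and> is_line A' \<and> is_line B' \<and>
     A \<noteq> B \<and> A \<noteq> A' \<and> A \<noteq> B' \<and> B \<noteq> A' \<and> B \<noteq> B' \<and> A' \<noteq> B' \<and>
     \<not> (\<exists>P. P \<in> A \<and> P \<in> B \<and> P \<in> A' \<and> P \<in> B') \<and>
     \<not> parallel A B \<and> \<not> parallel B A' \<and> \<not> parallel A' B' \<and> \<not> parallel B' A"

definition vertices ::
  "('a::field \<times> 'a) set \<Rightarrow> ('a \<times> 'a) set \<Rightarrow> ('a \<times> 'a) set \<Rightarrow> ('a \<times> 'a) set \<Rightarrow> ('a \<times> 'a) list" where
  "vertices A B A' B' = [meet A B, meet B A', meet A' B', meet B' A]"

definition centroid ::
  "('a::field \<times> 'a) set \<Rightarrow> ('a \<times> 'a) set \<Rightarrow> ('a \<times> 'a) set \<Rightarrow> ('a \<times> 'a) set \<Rightarrow> 'a \<times> 'a" where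
  "centroid A B A' B' =
     ((fst (meet A B) + fst (meet B A') + fst (meet A' B') + fst (meet B' A)) / 4,
      (snd (meet A B) + snd (meet B A') + snd (meet A' B') + snd (meet B' A)) / 4)"

definition standard_form ::
  "('a::field \<times> 'a) set \<Rightarrow> ('a \<times> 'a) set \<Rightarrow> ('a \<times> 'a) set \<Rightarrow> ('a \<times> 'a) set \<Rightarrow> bool" where
  "standard_form A B A' B' \<longleftrightarrow> quadrilateral A B A' B' \<and>
     A = {(x, y). y = 0} \<and> A' = {(x, y). x = 0}"

definition slope :: "('a::field \<times> 'a) set \<Rightarrow> 'a" where
  "slope L = (THE t. \<exists>c. L = {(x, y). y = t * x + c})"

definition coefficient ::
  "('a::field \<times> 'a) set \<Rightarrow> ('a \<times> 'a) set \<Rightarrow> ('a \<times> 'a) set \<Rightarrow> ('a \<times> 'a) set \<Rightarrow> 'a" where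
  "coefficient A B A' B' = slope B * slope B'"

definition crosses :: "('a::field \<times> 'a) set \<Rightarrow> ('a \<times> 'a) set \<Rightarrow> ('a \<times> 'a) set \<Rightarrow> bool" where
  "crosses L L1 L2 \<longleftrightarrow> L \<noteq> L1 \<and> L \<noteq> L2 \<and> \<not> (parallel L L1 \<and> parallel L L2)"

definition mid :: "('a::field \<times> 'a) set \<Rightarrow> ('a \<times> 'a) set \<Rightarrow> ('a \<times> 'a) set \<Rightarrow> 'a ppoint" where
  "mid L1 L2 L = (if parallel L L1 \<or> parallel L L2 then Inf (line_dir L)
                  else Fin (midp (meet L L1) (meet L L2)))"

definition bisector_with_mid ::
  "('a::field \<times> 'a) set \<Rightarrow> ('a \<times> 'a) set \<Rightarrow> ('a \<times> 'a) set \<Rightarrow> ('a \<times> 'a) set \<Rightarrow>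
   ('a \<times> 'a) set \<Rightarrow> 'a ppoint \<Rightarrow> bool" where
  "bisector_with_mid A B A' B' L M \<longleftrightarrow> is_line L \<and>
     (crosses L A A' \<or> crosses L B B') \<and>
     (crosses L A A' \<longrightarrow> mid A A' L = M) \<and>
     (crosses L B B' \<longrightarrow> mid B B' L = M)"

end

theory Submission
  imports Defs
begin

(* Write a line L through P = (p, q) as a x + c y + d = 0 and a side l_i as
   a_i x + c_i y + d_i = 0, and let f_i = a_i p + c_i q + d_i and g_i = a_i c - c_i a.
   Walking from P along L by t (-c, a) changes f_i by -t g_i, so L meets l_i at t = f_i / g_i,
   and P is the midpoint of the two meeting points iff f_1 g_2 + f_2 g_1 = 0. This condition
   holds trivially when L does not cross {l_1, l_2}, and every line crosses one of the two
   pairs of opposite sides; so L bisects Q with midpoint P iff P lies on L and the condition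
   holds for both pairs. For the axes A, A' it reads q c = p a, which forces
   L = {q X + p Y - 2 p q = 0} when P is not the origin. In standard form B and B' are
   Y = b X + beta and Y = b' X + beta', so mu = b b', and the centroid gives
   4 k = beta + beta' and 4 h b b' = -(beta b' + beta' b); with these the condition for
   {B, B'} becomes -2 (q (q - 2 k) - mu p (p - 2 h)) = 0 on that line, and
   4 (a k - mu h c) = 0 at P = (0, 0). *)

section \<open>Lines in coordinates\<close>

definition coord_line :: "'a::field \<Rightarrow> 'a \<Rightarrow> 'a \<Rightarrow> ('a \<times> 'a) set" where
  "coord_line a b c = {(x, y). a * x + b * y + c = 0}"

lemma mem_coord_line [simp]: "(x, y) \<in> coord_line a b c \<longleftrightarrow> a * x + b * y + c = 0"
  by (simp add: coord_line_def)

lemma is_line_iff_coord_line: "is_line L \<longleftrightarrow> (\<exists>a b c. (a, b) \<noteq> (0, 0) \<and> L = coord_line a b c)"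
  by (simp add: is_line_def coord_line_def)

lemma is_line_coord_line: "(a, b) \<noteq> (0, 0) \<Longrightarrow> is_line (coord_line a b c)"
  by (auto simp: is_line_iff_coord_line)

lemma is_lineE:
  assumes "is_line L"
  obtains a b c where "(a, b) \<noteq> (0, 0)" "L = coord_line a b c"
  using assms by (auto simp: is_line_iff_coord_line)

lemma coord_line_nonempty:
  assumes "(a, b) \<noteq> (0, 0)"
  obtains P where "P \<in> coord_line a b c"
proof (cases "a = 0")
  case True
  with assms have "b \<noteq> 0" by simp
  with that[of "(0, - c / b)"] show thesis by simp
next
  case False
  with that[of "(- c / a, 0)"] show thesis by simp
qed

lemma coord_line_diff:
  assumes "P \<in> coord_line a b c" "Q \<in> coord_line a b c"
  shows "a * (fst Q - fst P) + b * (snd Q - snd P) = 0"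
proof -
  obtain x y u v where P: "P = (x, y)" and Q: "Q = (u, v)" by fastforce
  have "a * (u - x) + b * (v - y) = (a * u + b * v + c) - (a * x + b * y + c)"
    by (simp add: algebra_simps)
  also have "\<dots> = 0" using assms by (simp add: P Q)
  finally show ?thesis by (simp add: P Q)
qed

lemma line_dir_coord_line:
  assumes "(a, b) \<noteq> (0, 0)"
  shows "line_dir (coord_line a b c) = coord_line a b 0"
proof
  show "line_dir (coord_line a b c) \<subseteq> coord_line a b 0"
    using coord_line_diff by (fastforce simp: line_dir_def)
next
  show "coord_line a b 0 \<subseteq> line_dir (coord_line a b c)"
  proof
    fix v assume v: "v \<in> coord_line a b 0"
    obtain R where R: "R \<in> coord_line a b c" using coord_line_nonempty[OF assms] .
    let ?P = "(fst R + fst v, snd R + snd v)"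
    have "?P \<in> coord_line a b c" using R v
      by (cases R, cases v) (simp add: algebra_simps)
    moreover have "v = (fst ?P - fst R, snd ?P - snd R)" by simp
    ultimately show "v \<in> line_dir (coord_line a b c)"
      unfolding line_dir_def using R by blast
  qed
qed

lemma coord_line_0_subset:
  assumes "(a, b) \<noteq> (0, 0)" "a * b' = a' * b"
  shows "coord_line a b 0 \<subseteq> coord_line a' b' 0"
proof clarsimp
  fix x y assume xy: "a * x + b * y = 0"
  show "a' * x + b' * y = 0"
  proof (cases "a = 0")
    case False
    have "a * (a' * x + b' * y) = a' * (a * x + b * y) + (a * b' - a' * b) * y"
      by (simp add: algebra_simps)
    with assms xy False show ?thesis by simp
  next
    case True
    with assms have "b \<noteq> 0" by simp
    have "b * (a' * x + b' * y) = b' * (a * x + b * y) + (a' * b - a * b') * x"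
      by (simp add: algebra_simps)
    with assms xy \<open>b \<noteq> 0\<close> show ?thesis by simp
  qed
qed

lemma parallel_coord_line_iff:
  assumes "(a, b) \<noteq> (0, 0)" "(a', b') \<noteq> (0, 0)"
  shows "parallel (coord_line a b c) (coord_line a' b' c') \<longleftrightarrow> a * b' = a' * b"
proof -
  have "coord_line a b 0 = coord_line a' b' 0 \<longleftrightarrow> a * b' = a' * b"
  proof
    assume "coord_line a b 0 = coord_line a' b' 0"
    moreover have "(b, - a) \<in> coord_line a b 0" by (simp add: algebra_simps)
    ultimately show "a * b' = a' * b" by (simp add: algebra_simps)
  next
    assume "a * b' = a' * b"
    then show "coord_line a b 0 = coord_line a' b' 0"
      using coord_line_0_subset[of a b b' a'] coord_line_0_subset[of a' b' b a] assms
      by (simp add: subset_antisym)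
  qed
  with assms show ?thesis
    by (simp add: parallel_def line_dir_coord_line)
qed

lemma parallel_sym: "parallel L M \<longleftrightarrow> parallel M L"
  by (auto simp: parallel_def)

lemma parallel_subset:
  assumes "is_line M" "parallel L M" "P \<in> L" "P \<in> M"
  shows "L \<subseteq> M"
proof
  obtain a b c where ab: "(a, b) \<noteq> (0, 0)" and M: "M = coord_line a b c"
    using assms(1) by (rule is_lineE)
  fix X assume "X \<in> L"
  with \<open>P \<in> L\<close> have "(fst X - fst P, snd X - snd P) \<in> line_dir L"
    unfolding line_dir_def by blast
  also have "line_dir L = coord_line a b 0"
    using assms(2) ab by (simp add: parallel_def M line_dir_coord_line)
  finally show "X \<in> M" using \<open>P \<in> M\<close>
    by (cases X, cases P) (simp add: M algebra_simps)
qed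

lemma parallel_lines_eq:
  assumes "is_line L" "is_line M" "parallel L M" "P \<in> L" "P \<in> M"
  shows "L = M"
  using parallel_subset[of M L P] parallel_subset[of L M P] assms parallel_sym by blast

lemma meet_coord_line_eqI:
  assumes det: "a * b' \<noteq> a' * b"
    and P: "P \<in> coord_line a b c" "P \<in> coord_line a' b' c'"
  shows "meet (coord_line a b c) (coord_line a' b' c') = P"
  unfolding meet_def
proof (rule the_equality)
  fix Q assume "Q \<in> coord_line a b c \<and> Q \<in> coord_line a' b' c'"
  with P have "a * (fst Q - fst P) + b * (snd Q - snd P) = 0"
    and "a' * (fst Q - fst P) + b' * (snd Q - snd P) = 0"
    using coord_line_diff by blast+
  moreover have "(a * b' - a' * b) * (fst Q - fst P) =
      b' * (a * (fst Q - fst P) + b * (snd Q - snd P)) - b * (a' * (fst Q - fst P) + b' * (snd Q - snd P))"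
    and "(a * b' - a' * b) * (snd Q - snd P) =
      a * (a' * (fst Q - fst P) + b' * (snd Q - snd P)) - a' * (a * (fst Q - fst P) + b * (snd Q - snd P))"
    by (simp_all add: algebra_simps)
  ultimately have "(a * b' - a' * b) * (fst Q - fst P) = 0" "(a * b' - a' * b) * (snd Q - snd P) = 0"
    by simp_all
  with det show "Q = P" by (simp add: prod_eq_iff)
qed (use P in simp)

lemma meet_coord_line_through:
  fixes a c d a1 c1 d1 p q :: "'a::field"
  assumes P: "(p, q) \<in> coord_line a c d" and g: "a1 * c - c1 * a \<noteq> 0"
  defines "t \<equiv> (a1 * p + c1 * q + d1) / (a1 * c - c1 * a)"
  shows "meet (coord_line a c d) (coord_line a1 c1 d1) = (p - t * c, q + t * a)"
    and "(p - t * c, q + t * a) \<in> coord_line a c d"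
    and "(p - t * c, q + t * a) \<in> coord_line a1 c1 d1"
proof -
  have "a * (p - t * c) + c * (q + t * a) + d = a * p + c * q + d"
    by (simp add: algebra_simps)
  with P show on_L: "(p - t * c, q + t * a) \<in> coord_line a c d" by simp
  have "a1 * (p - t * c) + c1 * (q + t * a) + d1 = (a1 * p + c1 * q + d1) - t * (a1 * c - c1 * a)"
    by (simp add: algebra_simps)
  with g show on_l1: "(p - t * c, q + t * a) \<in> coord_line a1 c1 d1" by (simp add: t_def)
  from g have "a * c1 \<noteq> a1 * c" by (auto simp: algebra_simps)
  then show "meet (coord_line a c d) (coord_line a1 c1 d1) = (p - t * c, q + t * a)"
    using on_L on_l1 by (rule meet_coord_line_eqI)
qed

lemma meet_mem:
  assumes "is_line L" "is_line M" "\<not> parallel L M"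
  shows "meet L M \<in> L" "meet L M \<in> M"
proof -
  obtain a c d where nz: "(a, c) \<noteq> (0, 0)" and L: "L = coord_line a c d"
    using assms(1) by (rule is_lineE)
  obtain a1 c1 d1 where nz1: "(a1, c1) \<noteq> (0, 0)" and M: "M = coord_line a1 c1 d1"
    using assms(2) by (rule is_lineE)
  obtain P where "P \<in> L" using coord_line_nonempty[OF nz] L by blast
  then obtain p q where P: "(p, q) \<in> coord_line a c d" using L by (cases P) simp
  from assms(3) nz nz1 have g: "a1 * c - c1 * a \<noteq> 0"
    by (simp add: L M parallel_coord_line_iff mult.commute)
  show "meet L M \<in> L" "meet L M \<in> M"
    unfolding L M meet_coord_line_through(1)[OF P g]
    using meet_coord_line_through(2,3)[OF P g] by simp_all
qed

section \<open>Midpoints of the intersections with two lines\<close>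

lemma midp_mem_coord_line:
  fixes a b c :: "'a::field"
  assumes "(2::'a) \<noteq> 0" "P \<in> coord_line a b c" "Q \<in> coord_line a b c"
  shows "midp P Q \<in> coord_line a b c"
proof -
  obtain x y u v where P: "P = (x, y)" and Q: "Q = (u, v)" by fastforce
  have "a * ((x + u) / 2) + b * ((y + v) / 2) + c = ((a * x + b * y + c) + (a * u + b * v + c)) / 2"
    using assms(1) by (simp add: add_divide_distrib algebra_simps)
  with assms show ?thesis by (simp add: P Q midp_def)
qed

lemma mid_eq_Fin_imp_mem:
  assumes "(2::'a::field) \<noteq> 0" "is_line L" "is_line l1" "is_line l2"
    and "mid l1 l2 L = Fin (P :: 'a \<times> 'a)"
  shows "P \<in> L"
proof -
  from assms(5) have "\<not> parallel L l1" "\<not> parallel L l2"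
    and P: "P = midp (meet L l1) (meet L l2)"
    by (auto simp: mid_def split: if_splits)
  with assms(2-4) have "meet L l1 \<in> L" "meet L l2 \<in> L" by (simp_all add: meet_mem)
  moreover obtain a b c where "L = coord_line a b c" using assms(2) by (rule is_lineE)
  ultimately show ?thesis using assms(1) by (simp add: P midp_mem_coord_line)
qed

lemma midp_meet_coord_line_eq_iff:
  fixes a c d a1 c1 d1 a2 c2 d2 p q :: "'a::field"
  assumes two: "(2::'a) \<noteq> 0" and L: "(a, c) \<noteq> (0, 0)" "(p, q) \<in> coord_line a c d"
    and g1: "a1 * c - c1 * a \<noteq> 0" and g2: "a2 * c - c2 * a \<noteq> 0"
  shows "midp (meet (coord_line a c d) (coord_line a1 c1 d1))
      (meet (coord_line a c d) (coord_line a2 c2 d2)) = (p, q) \<longleftrightarrow>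
     (a1 * p + c1 * q + d1) * (a2 * c - c2 * a) + (a2 * p + c2 * q + d2) * (a1 * c - c1 * a) = 0"
proof -
  define s where
    "s = (a1 * p + c1 * q + d1) / (a1 * c - c1 * a) + (a2 * p + c2 * q + d2) / (a2 * c - c2 * a)"
  have "midp (meet (coord_line a c d) (coord_line a1 c1 d1))
      (meet (coord_line a c d) (coord_line a2 c2 d2)) = (p - s / 2 * c, q + s / 2 * a)"
    using two
    by (simp add: meet_coord_line_through(1)[OF L(2) g1] meet_coord_line_through(1)[OF L(2) g2]
        midp_def s_def field_simps)
  also have "\<dots> = (p, q) \<longleftrightarrow> s = 0"
    using two L(1) by auto
  also have "s = 0 \<longleftrightarrow>
      (a1 * p + c1 * q + d1) * (a2 * c - c2 * a) + (a2 * p + c2 * q + d2) * (a1 * c - c1 * a) = 0"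
    using g1 g2 by (simp add: s_def add_frac_eq)
  finally show ?thesis .
qed

lemma crosses_imp_mid_coord_line_eq_Fin_iff:
  fixes a c d a1 c1 d1 a2 c2 d2 p q :: "'a::field"
  assumes two: "(2::'a) \<noteq> 0"
    and nz: "(a, c) \<noteq> (0, 0)" "(a1, c1) \<noteq> (0, 0)" "(a2, c2) \<noteq> (0, 0)"
    and P: "(p, q) \<in> coord_line a c d"
  shows "(crosses (coord_line a c d) (coord_line a1 c1 d1) (coord_line a2 c2 d2) \<longrightarrow>
      mid (coord_line a1 c1 d1) (coord_line a2 c2 d2) (coord_line a c d) = Fin (p, q))
    \<longleftrightarrow> (a1 * p + c1 * q + d1) * (a2 * c - c2 * a) + (a2 * p + c2 * q + d2) * (a1 * c - c1 * a) = 0"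
    (is "(crosses ?L ?l1 ?l2 \<longrightarrow> _) \<longleftrightarrow> ?f1 * ?g2 + ?f2 * ?g1 = 0")
proof -
  have par: "parallel ?L (coord_line a' c' d') \<longleftrightarrow> a' * c - c' * a = 0"
    if "(a', c') \<noteq> (0, 0)" for a' c' d'
    using nz(1) that by (auto simp: parallel_coord_line_iff algebra_simps)
  have eq: "?L = coord_line a' c' d' \<longleftrightarrow> a' * c - c' * a = 0 \<and> a' * p + c' * q + d' = 0"
    if "(a', c') \<noteq> (0, 0)" for a' c' d'
  proof
    assume "?L = coord_line a' c' d'"
    with P par[OF that] show "a' * c - c' * a = 0 \<and> a' * p + c' * q + d' = 0"
      by (auto simp: parallel_def)
  next
    assume "a' * c - c' * a = 0 \<and> a' * p + c' * q + d' = 0"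
    with P par[OF that] nz(1) that show "?L = coord_line a' c' d'"
      by (intro parallel_lines_eq[where P = "(p, q)"]) (simp_all add: is_line_coord_line)
  qed
  have mid: "mid ?l1 ?l2 ?L = Fin (p, q) \<longleftrightarrow> ?g1 \<noteq> 0 \<and> ?g2 \<noteq> 0 \<and> ?f1 * ?g2 + ?f2 * ?g1 = 0"
    using midp_meet_coord_line_eq_iff[OF two nz(1) P] par[OF nz(2)] par[OF nz(3)]
    by (auto simp: mid_def)
  have "crosses ?L ?l1 ?l2 \<longleftrightarrow>
      \<not> (?g1 = 0 \<and> ?f1 = 0) \<and> \<not> (?g2 = 0 \<and> ?f2 = 0) \<and> \<not> (?g1 = 0 \<and> ?g2 = 0)"
    by (simp add: crosses_def eq[OF nz(2)] eq[OF nz(3)] par[OF nz(2)] par[OF nz(3)])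
  then show ?thesis
    unfolding mid by auto
qed

section \<open>Bisectors of quadrilaterals\<close>

lemma quadrilateral_crosses:
  assumes "quadrilateral A B A' B'"
  shows "crosses L A A' \<or> crosses L B B'"
proof -
  from assms have "line_dir A \<noteq> line_dir B" "line_dir B \<noteq> line_dir A'"
    "line_dir A' \<noteq> line_dir B'" "line_dir B' \<noteq> line_dir A"
    by (simp_all add: quadrilateral_def parallel_def)
  then show ?thesis
    unfolding crosses_def parallel_def by metis
qed

lemma bisector_with_mid_Fin_iff:
  assumes "(2::'a::field) \<noteq> 0" "quadrilateral A B A' B'" "is_line L"
  shows "bisector_with_mid A B A' B' L (Fin (P :: 'a \<times> 'a)) \<longleftrightarrow> P \<in> L \<and>
    (crosses L A A' \<longrightarrow> mid A A' L = Fin P) \<and> (crosses L B B' \<longrightarrow> mid B B' L = Fin P)"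
    (is "_ \<longleftrightarrow> ?rhs")
proof -
  have lines: "is_line A" "is_line B" "is_line A'" "is_line B'"
    using assms(2) by (simp_all add: quadrilateral_def)
  show ?thesis
  proof
    assume bis: "bisector_with_mid A B A' B' L (Fin P)"
    then have "mid A A' L = Fin P \<or> mid B B' L = Fin P"
      by (auto simp: bisector_with_mid_def)
    with lines have "P \<in> L"
      using mid_eq_Fin_imp_mem[OF assms(1,3)] by blast
    with bis show ?rhs
      by (simp add: bisector_with_mid_def)
  next
    assume ?rhs
    with assms(3) quadrilateral_crosses[OF assms(2)] show "bisector_with_mid A B A' B' L (Fin P)"
      by (simp add: bisector_with_mid_def)
  qed
qed

section \<open>Quadrilaterals in standard form\<close>

lemma nonvertical_line_slope_form:
  assumes "is_line L" "\<not> parallel L (coord_line 1 0 0)"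
  obtains t s where "L = coord_line t (-1) s"
proof -
  obtain a c d where nz: "(a, c) \<noteq> (0, 0)" and L: "L = coord_line a c d"
    using assms(1) by (rule is_lineE)
  with assms(2) have "c \<noteq> 0" by (simp add: parallel_coord_line_iff)
  have "(x, y) \<in> coord_line (- a / c) (-1) (- d / c) \<longleftrightarrow> (x, y) \<in> coord_line a c d" for x y
  proof -
    have eq: "- a / c * x + -1 * y + - d / c = - (a * x + c * y + d) / c"
      using \<open>c \<noteq> 0\<close> by (simp add: field_simps)
    show ?thesis
      using \<open>c \<noteq> 0\<close> by (simp only: mem_coord_line eq divide_eq_0_iff neg_equal_0_iff_equal) simp
  qed
  then have "coord_line a c d = coord_line (- a / c) (-1) (- d / c)" by auto
  with L that show thesis by blast
qed

lemma slope_coord_line: "slope (coord_line t (-1) s) = t"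
proof -
  have line: "coord_line t (-1) s = {(x, y). y = t * x + s}"
    by (auto simp: coord_line_def algebra_simps)
  show ?thesis
    unfolding slope_def line
  proof (rule the_equality)
    fix t' assume "\<exists>s'. {(x, y). y = t * x + s} = {(x, y). y = t' * x + s'}"
    then obtain s' where eq: "{(x, y). y = t * x + s} = {(x, y). y = t' * x + s'}" by blast
    have "(0, s) \<in> {(x, y). y = t * x + s}" "(1, t + s) \<in> {(x, y). y = t * x + s}" by simp_all
    then have "(0, s) \<in> {(x, y). y = t' * x + s'}" "(1, t + s) \<in> {(x, y). y = t' * x + s'}"
      unfolding eq .
    then show "t' = t" by simp
  qed auto
qed

lemma standard_formE:
  assumes "standard_form A B A' B'"
  obtains b \<beta> b' \<beta>' where "A = coord_line 0 1 0" "A' = coord_line 1 0 0"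
    "B = coord_line b (-1) \<beta>" "B' = coord_line b' (-1) \<beta>'"
proof -
  from assms have A: "A = coord_line 0 1 0" and A': "A' = coord_line 1 0 0"
    by (auto simp: standard_form_def coord_line_def)
  from assms have "is_line B" "is_line B'" "\<not> parallel B A'" "\<not> parallel B' A'"
    by (auto simp: standard_form_def quadrilateral_def parallel_sym)
  with A' obtain b \<beta> b' \<beta>' where "B = coord_line b (-1) \<beta>" "B' = coord_line b' (-1) \<beta>'"
    by (metis nonvertical_line_slope_form)
  with A A' that show thesis by blast
qed

lemma four_neq_zero: "(2::'a::field) \<noteq> 0 \<Longrightarrow> (4::'a) \<noteq> 0"
  by (metis mult_2_right mult_eq_0_iff numeral_Bit0)

context
  fixes A B A' B' :: "('a::field \<times> 'a) set" and b \<beta> b' \<beta>' :: 'a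
  assumes two: "(2::'a) \<noteq> 0" and quad: "quadrilateral A B A' B'"
    and A: "A = coord_line 0 1 0" and A': "A' = coord_line 1 0 0"
    and B: "B = coord_line b (-1) \<beta>" and B': "B' = coord_line b' (-1) \<beta>'"
begin

lemma slopes_nonzero: "b \<noteq> 0" "b' \<noteq> 0"
  using quad by (auto simp: quadrilateral_def A B B' parallel_coord_line_iff)

lemma centroid_standard: "centroid A B A' B' = (- (\<beta> / b + \<beta>' / b') / 4, (\<beta> + \<beta>') / 4)"
proof -
  have "meet A B = (- (\<beta> / b), 0)" "meet B A' = (0, \<beta>)"
    "meet A' B' = (0, \<beta>')" "meet B' A = (- (\<beta>' / b'), 0)"
    using slopes_nonzero by (simp_all add: A A' B B' meet_coord_line_eqI)
  then show ?thesis by (simp add: centroid_def)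
qed

lemma coefficient_standard: "coefficient A B A' B' = b * b'"
  by (simp add: coefficient_def B B' slope_coord_line)

lemma bisector_standard_iff:
  assumes "(a, c) \<noteq> (0, 0)"
  shows "bisector_with_mid A B A' B' (coord_line a c d) (Fin (p, q)) \<longleftrightarrow>
    a * p + c * q + d = 0 \<and> q * c = p * a \<and>
    (b * p - q + \<beta>) * (b' * c + a) + (b' * p - q + \<beta>') * (b * c + a) = 0"
proof -
  have "is_line (coord_line a c d)"
    using assms by (rule is_line_coord_line)
  moreover have "(crosses (coord_line a c d) A A' \<longrightarrow> mid A A' (coord_line a c d) = Fin (p, q))
      \<longleftrightarrow> q * c = p * a" if "(p, q) \<in> coord_line a c d"
    using crosses_imp_mid_coord_line_eq_Fin_iff[where ?a1.0 = 0 and ?c1.0 = 1 and ?d1.0 = 0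
        and ?a2.0 = 1 and ?c2.0 = 0 and ?d2.0 = 0, OF two assms _ _ that]
    by (simp add: A A')
  moreover have "(crosses (coord_line a c d) B B' \<longrightarrow> mid B B' (coord_line a c d) = Fin (p, q))
      \<longleftrightarrow> (b * p - q + \<beta>) * (b' * c + a) + (b' * p - q + \<beta>') * (b * c + a) = 0"
    if "(p, q) \<in> coord_line a c d"
    using crosses_imp_mid_coord_line_eq_Fin_iff[where ?a1.0 = b and ?c1.0 = "-1" and ?d1.0 = \<beta>
        and ?a2.0 = b' and ?c2.0 = "-1" and ?d2.0 = \<beta>', OF two assms _ _ that]
    by (simp add: B B')
  ultimately show ?thesis
    by (auto simp: bisector_with_mid_Fin_iff[OF two quad])
qed

lemma centroid_standard_eqs:
  assumes "centroid A B A' B' = (h, k)"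
  shows "4 * k = \<beta> + \<beta>'" "4 * h * (b * b') = - (\<beta> * b' + \<beta>' * b)"
proof -
  from assms have "h = - (\<beta> / b + \<beta>' / b') / 4" "k = (\<beta> + \<beta>') / 4"
    by (simp_all add: centroid_standard)
  with four_neq_zero[OF two] slopes_nonzero
  show "4 * k = \<beta> + \<beta>'" "4 * h * (b * b') = - (\<beta> * b' + \<beta>' * b)"
    by (simp_all add: field_simps)
qed

lemma bisector_with_nonzero_mid_iff:
  assumes cen: "centroid A B A' B' = (h, k)" and "is_line L" "(p, q) \<noteq> (0, 0)"
  shows "bisector_with_mid A B A' B' L (Fin (p, q)) \<longleftrightarrow>
    q * (q - 2 * k) - coefficient A B A' B' * p * (p - 2 * h) = 0 \<and>
    L = {(x, y). q * x + p * y - 2 * p * q = 0}"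
proof -
  let ?T = "coord_line q p (- (2 * p * q))"
  have T: "{(x, y). q * x + p * y - 2 * p * q = 0} = ?T" by auto
  have nzT: "(q, p) \<noteq> (0, 0)" using assms(3) by auto
  obtain a c d where nz: "(a, c) \<noteq> (0, 0)" and L: "L = coord_line a c d"
    using assms(2) by (rule is_lineE)
  have "L = ?T" if "bisector_with_mid A B A' B' L (Fin (p, q))"
  proof (rule parallel_lines_eq)
    from that have "(p, q) \<in> L" "q * c = p * a"
      by (simp_all add: L bisector_standard_iff[OF nz])
    then show "parallel L ?T" "(p, q) \<in> L"
      using nz nzT by (simp_all add: L parallel_coord_line_iff mult.commute)
  qed (use assms(2) nzT in \<open>simp_all add: is_line_coord_line\<close>)
  then have "bisector_with_mid A B A' B' L (Fin (p, q)) \<longleftrightarrow>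
      L = ?T \<and> bisector_with_mid A B A' B' ?T (Fin (p, q))"
    by blast
  moreover have "bisector_with_mid A B A' B' ?T (Fin (p, q)) \<longleftrightarrow>
      q * (q - 2 * k) - b * b' * p * (p - 2 * h) = 0"
  proof -
    have "(b * p - q + \<beta>) * (b' * p + q) + (b' * p - q + \<beta>') * (b * p + q) =
        2 * b * b' * p * p - 2 * q * q + p * (\<beta> * b' + \<beta>' * b) + q * (\<beta> + \<beta>')"
      by (simp add: algebra_simps)
    also have "\<dots> = 2 * b * b' * p * p - 2 * q * q + p * (- (4 * h * (b * b'))) + q * (4 * k)"
      unfolding centroid_standard_eqs[OF cen] by simp
    also have "\<dots> = - 2 * (q * (q - 2 * k) - b * b' * p * (p - 2 * h))"
      by (simp add: algebra_simps)
    finally show ?thesis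
      using two by (simp add: bisector_standard_iff[OF nzT] mult.commute) (rule eq_commute)
  qed
  ultimately show ?thesis
    unfolding T coefficient_standard by blast
qed

lemma bisector_with_zero_mid_iff:
  assumes cen: "centroid A B A' B' = (h, k)" and nz: "(a, c) \<noteq> (0, 0)"
  shows "bisector_with_mid A B A' B' (coord_line a c d) (Fin (0, 0)) \<longleftrightarrow>
    d = 0 \<and> a * k = coefficient A B A' B' * h * c"
proof -
  have "\<beta> * (b' * c + a) + \<beta>' * (b * c + a) = a * (\<beta> + \<beta>') - c * - (\<beta> * b' + \<beta>' * b)"
    by (simp add: algebra_simps)
  also have "\<dots> = a * (4 * k) - c * (4 * h * (b * b'))"
    unfolding centroid_standard_eqs[OF cen] ..
  also have "\<dots> = 4 * (a * k - b * b' * h * c)"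
    by (simp add: algebra_simps)
  finally show ?thesis
    using four_neq_zero[OF two] by (simp add: bisector_standard_iff[OF nz] coefficient_standard)
qed

lemma bisector_through_origin:
  assumes "centroid A B A' B' = (0, 0)" "is_line L" "(0, 0) \<in> L"
  shows "bisector_with_mid A B A' B' L (Fin (0, 0))"
proof -
  obtain a c d where nz: "(a, c) \<noteq> (0, 0)" and L: "L = coord_line a c d"
    using assms(2) by (rule is_lineE)
  with assms(3) show ?thesis
    by (simp add: bisector_with_zero_mid_iff[OF assms(1) nz])
qed

lemma bisector_with_zero_mid_unique:
  assumes cen: "centroid A B A' B' = (h, k)" and hk: "(h, k) \<noteq> (0, 0)"
  shows "is_line L \<and> bisector_with_mid A B A' B' L (Fin (0, 0)) \<longleftrightarrow>
    L = {(x, y). k * y + coefficient A B A' B' * h * x = 0}"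
proof -
  define \<mu> where "\<mu> = coefficient A B A' B'"
  let ?T = "coord_line (\<mu> * h) k 0"
  have T: "{(x, y). k * y + \<mu> * h * x = 0} = ?T" by (auto simp: add.commute)
  have "\<mu> \<noteq> 0" using slopes_nonzero by (simp add: \<mu>_def coefficient_standard)
  with hk have nzT: "(\<mu> * h, k) \<noteq> (0, 0)" by auto
  then have T_line: "is_line ?T" by (rule is_line_coord_line)
  have "L = ?T" if "is_line L" "bisector_with_mid A B A' B' L (Fin (0, 0))"
  proof -
    obtain a c d where nz: "(a, c) \<noteq> (0, 0)" and L: "L = coord_line a c d"
      using \<open>is_line L\<close> by (rule is_lineE)
    with that(2) have "d = 0" "a * k = \<mu> * h * c"
      by (simp_all add: bisector_with_zero_mid_iff[OF cen nz] \<mu>_def)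
    with nz nzT have "parallel L ?T" "(0, 0) \<in> L"
      by (simp_all add: L parallel_coord_line_iff)
    with \<open>is_line L\<close> T_line show "L = ?T"
      by (intro parallel_lines_eq[where P = "(0, 0)"]) simp_all
  qed
  moreover have "bisector_with_mid A B A' B' ?T (Fin (0, 0))"
    using bisector_with_zero_mid_iff[OF cen nzT] by (simp add: \<mu>_def)
  ultimately show ?thesis
    unfolding \<mu>_def[symmetric] T using T_line by blast
qed

end

theorem proposition4p4:
  fixes A B A' B' :: "('a::field \<times> 'a) set" and h k \<mu> :: 'a
  assumes char: "(2::'a) \<noteq> 0"
    and std: "standard_form A B A' B'"
    and cen: "centroid A B A' B' = (h, k)"
    and coef: "\<mu> = coefficient A B A' B'"
  shows "(\<forall>L p q. is_line L \<longrightarrow> (p, q) \<noteq> (0, 0) \<longrightarrow>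
            (bisector_with_mid A B A' B' L (Fin (p, q)) \<longleftrightarrow>
               (q * (q - 2 * k) - \<mu> * p * (p - 2 * h) = 0 \<and>
                L = {(x, y). q * x + p * y - 2 * p * q = 0})))
       \<and> ((h, k) = (0, 0) \<longrightarrow>
            (\<forall>L. is_line L \<and> (0, 0) \<in> L \<longrightarrow> bisector_with_mid A B A' B' L (Fin (0, 0))))
       \<and> ((h, k) \<noteq> (0, 0) \<longrightarrow>
            (\<forall>L. (is_line L \<and> bisector_with_mid A B A' B' L (Fin (0, 0))) \<longleftrightarrow>
                  L = {(x, y). k * y + \<mu> * h * x = 0}))"
proof -
  from std obtain b \<beta> b' \<beta>' where coords: "A = coord_line 0 1 0" "A' = coord_line 1 0 0"
    "B = coord_line b (-1) \<beta>" "B' = coord_line b' (-1) \<beta>'"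
    by (rule standard_formE)
  from std have quad: "quadrilateral A B A' B'"
    unfolding standard_form_def by blast
  note standard = char quad coords
  show ?thesis
    unfolding coef
    using bisector_with_nonzero_mid_iff[OF standard cen]
      bisector_through_origin[OF standard] cen
      bisector_with_zero_mid_unique[OF standard cen]
    by simp
qed

end
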